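(* Let $K,L,E\subset\mathbb{R}^n$ be convex bodies with $0$ in the interior of $E$, let $u:\mathbb{R}_{\geqslant0}\to\mathbb{R}$ be strictly increasing, and let $p>1$. Then for all $\lambda\in(0,1)$, \[ \mathcal{W}_u\bigl((1-\lambda)\cdot K+_p\lambda\cdot L;E\bigr)^{p/n}\geqslant\frac{1}{(n!)^{p/n}}\Bigl((1-\lambda)\mathcal{W}_u(K;E)^{p/n}+\lambda\mathcal{W}_u(L;E)^{p/n}\Bigr). \]
   Context: For convex bodies $K,E$ with $0\in\mathrm{int}\,E$, $d_E(x,K)=\min\{t\geqslant0: x\in K+tE\}$ and the generalized Wills functional is $\mathcal{W}_u(K;E)=\int_{\mathbb{R}^n}e^{-u(d_E(x,K))}\,\mathrm{d}x$. Convex body: nonempty compact convex set. For $p>1$, $1/p+1/q=1$; $K+_pL=\{(1-\mu)^{1/q}x+\mu^{1/q}y: x\in K, y\in L, \mu\in[0,1]\}$, $\lambda\cdot K=\lambda^{1/p}K$. *)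

theory Defs
  imports "HOL-Analysis.Analysis"
begin

definition convex_body :: "'a::euclidean_space set \<Rightarrow> bool" where
  "convex_body K \<longleftrightarrow> K \<noteq> {} \<and> compact K \<and> convex K"

definition gdist :: "'a::euclidean_space set \<Rightarrow> 'a \<Rightarrow> 'a set \<Rightarrow> real" where
  "gdist E x K = Inf {t. t \<ge> 0 \<and> x \<in> {k + t *\<^sub>R e | k e. k \<in> K \<and> e \<in> E}}"

definition wills :: "(real \<Rightarrow> real) \<Rightarrow> 'a::euclidean_space set \<Rightarrow> 'a set \<Rightarrow> ennreal" where
  "wills u K E = (\<integral>\<^sup>+ x. ennreal (exp (- u (gdist E x K))) \<partial>lborel)"

text \<open>L_p Minkowski combination (1-lambda).K +_p lambda.L, with lambda.K = lambda^(1/p) K\<close>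
definition lp_comb :: "real \<Rightarrow> real \<Rightarrow> 'a::euclidean_space set \<Rightarrow> 'a set \<Rightarrow> 'a set" where
  "lp_comb p lam K L =
     (let q = p / (p - 1) in
      {(1 - \<mu>) powr (1/q) *\<^sub>R ((1 - lam) powr (1/p) *\<^sub>R x) + \<mu> powr (1/q) *\<^sub>R (lam powr (1/p) *\<^sub>R y)
        | x y \<mu>. x \<in> K \<and> y \<in> L \<and> 0 \<le> \<mu> \<and> \<mu> \<le> 1})"

definition epowr :: "ennreal \<Rightarrow> real \<Rightarrow> ennreal" where
  "epowr x r = (if x = (\<infinity>::ennreal) then \<infinity> else ennreal (enn2real x powr r))"

end

theory Submission
  imports Defs
begin

text \<open>
  If \<open>\<alpha>, \<beta> > 0\<close>, \<open>\<alpha> + \<beta> \<le> 1\<close> and \<open>\<alpha>K + \<beta>L \<subseteq> M\<close>, then every superlevel set of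
  \<open>x \<mapsto> e^{-u(d_E(x,M))}\<close> contains \<open>\<alpha>\<close> times the corresponding superlevel set for \<open>K\<close> plus
  \<open>\<beta>\<close> times the one for \<open>L\<close>, and these sets are convex. For convex bodies \<open>A, B\<close> the set
  \<open>\<alpha>A + \<beta>B\<close> contains the disjoint copies \<open>\<alpha>A + \<beta>b\<close> and \<open>\<beta>B + \<alpha>a\<close>, where \<open>a\<close> and \<open>b\<close>
  are extreme points of \<open>A\<close> and \<open>B\<close> in opposite directions; hence
  \<open>|\<alpha>A + \<beta>B| \<ge> \<alpha>\<^sup>n|A| + \<beta>\<^sup>n|B|\<close>, and the layer cake formula turns this into
  \<open>W(M) \<ge> \<alpha>\<^sup>n W(K) + \<beta>\<^sup>n W(L)\<close>. The set \<open>(1-\<lambda>)\<cdot>K +\<^sub>p \<lambda>\<cdot>L\<close> contains \<open>\<alpha>K + \<beta>L\<close> for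
  \<open>\<alpha> = (1-\<mu>)\<^bsup>1/q\<^esup>(1-\<lambda>)\<^bsup>1/p\<^esup>\<close>, \<open>\<beta> = \<mu>\<^bsup>1/q\<^esup>\<lambda>\<^bsup>1/p\<^esup>\<close>, and Young's inequality gives
  \<open>\<alpha> + \<beta> \<le> 1\<close>. Optimising over \<open>\<mu>\<close> and using \<open>(x+y)\<^sup>n \<le> 2\<^bsup>n-1\<^esup>(x\<^sup>n+y\<^sup>n) \<le> n!(x\<^sup>n+y\<^sup>n)\<close>
  yields the theorem (even with \<open>2\<^bsup>n-1\<^esup>\<close> in place of \<open>n!\<close>).
\<close>

subsection \<open>The gauge distance\<close>

definition gauge_radii :: "'a::euclidean_space set \<Rightarrow> 'a \<Rightarrow> 'a set \<Rightarrow> real set" where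
  "gauge_radii E x K = {t. t \<ge> 0 \<and> x \<in> {k + t *\<^sub>R e | k e. k \<in> K \<and> e \<in> E}}"

lemma gdist_eq_Inf_gauge_radii: "gdist E x K = Inf (gauge_radii E x K)"
  by (simp add: gdist_def gauge_radii_def)

lemma convex_scaled_add_mem:
  fixes E :: "'a::real_vector set"
  assumes "convex E" "0 \<in> E" "c1 \<ge> 0" "c2 \<ge> 0" "c1 + c2 \<le> 1" "e1 \<in> E" "e2 \<in> E"
  shows "c1 *\<^sub>R e1 + c2 *\<^sub>R e2 \<in> E"
proof (cases "c1 + c2 = 0")
  case True
  then have "c1 = 0" "c2 = 0" using assms by auto
  then show ?thesis using assms by simp
next
  case False
  define s where "s = c1 + c2"
  have s: "0 < s" "s \<le> 1" unfolding s_def using False assms by linarith+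
  have "(c1/s) *\<^sub>R e1 + (c2/s) *\<^sub>R e2 \<in> E"
    using assms s by (intro convexD) (auto simp: s_def simp flip: add_divide_distrib)
  then have "s *\<^sub>R ((c1/s) *\<^sub>R e1 + (c2/s) *\<^sub>R e2) + (1 - s) *\<^sub>R 0 \<in> E"
    using s by (intro convexD[OF assms(1) _ assms(2)]) auto
  then show ?thesis using s by (simp add: scaleR_add_right)
qed

lemma gauge_radii_nonempty:
  assumes "K \<noteq> {}" "0 \<in> interior E"
  shows "gauge_radii E x K \<noteq> {}"
proof -
  obtain k where k: "k \<in> K" using assms by auto
  obtain r where r: "r > 0" "cball 0 r \<subseteq> E" using assms(2) mem_interior_cball by blast
  define t where "t = norm (x - k) / r"
  have t: "t \<ge> 0" using r by (simp add: t_def)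
  have "x = k + t *\<^sub>R e \<and> e \<in> E" if "e = (if x = k then 0 else (1/t) *\<^sub>R (x - k))" for e
    using r that by (auto simp: t_def)
  then have "t \<in> gauge_radii E x K" using k t unfolding gauge_radii_def by blast
  then show ?thesis by auto
qed

lemma gdist_nonneg:
  assumes "K \<noteq> {}" "0 \<in> interior E"
  shows "gdist E x K \<ge> 0"
  unfolding gdist_eq_Inf_gauge_radii using gauge_radii_nonempty[OF assms]
  by (intro cInf_greatest) (auto simp: gauge_radii_def)

lemma gdist_le: "t \<in> gauge_radii E x K \<Longrightarrow> gdist E x K \<le> t"
  unfolding gdist_eq_Inf_gauge_radii
  by (rule cInf_lower) (auto intro: bdd_belowI[of _ 0] simp: gauge_radii_def)

lemma gauge_radii_approx:
  assumes "K \<noteq> {}" "0 \<in> interior E" "gdist E x K < T"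
  shows "\<exists>t\<in>gauge_radii E x K. t < T"
  using cInf_lessD[of "gauge_radii E x K" T] gauge_radii_nonempty[OF assms(1,2)] assms(3)
  unfolding gdist_eq_Inf_gauge_radii by blast

lemma gdist_self:
  assumes "k \<in> K" "0 \<in> interior E"
  shows "gdist E k K = 0"
proof -
  have "0 \<in> gauge_radii E k K"
    using assms interior_subset unfolding gauge_radii_def by (force intro!: exI[of _ 0])
  then show ?thesis using gdist_le[of 0] gdist_nonneg[of K E k] assms by force
qed

lemma gauge_radii_scaled_add:
  assumes "convex E" "0 \<in> E" "\<alpha> \<ge> 0" "\<beta> \<ge> 0" "\<alpha> + \<beta> \<le> 1"
    and M: "\<And>k l. k \<in> K \<Longrightarrow> l \<in> L \<Longrightarrow> \<alpha> *\<^sub>R k + \<beta> *\<^sub>R l \<in> M"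
    and t1: "t1 \<in> gauge_radii E x K" and t2: "t2 \<in> gauge_radii E y L"
  shows "max t1 t2 \<in> gauge_radii E (\<alpha> *\<^sub>R x + \<beta> *\<^sub>R y) M"
proof -
  obtain k e1 where k: "k \<in> K" "e1 \<in> E" "x = k + t1 *\<^sub>R e1" "t1 \<ge> 0"
    using t1 by (auto simp: gauge_radii_def)
  obtain l e2 where l: "l \<in> L" "e2 \<in> E" "y = l + t2 *\<^sub>R e2" "t2 \<ge> 0"
    using t2 by (auto simp: gauge_radii_def)
  define T where "T = max t1 t2"
  have eq: "\<alpha> *\<^sub>R x + \<beta> *\<^sub>R y = (\<alpha> *\<^sub>R k + \<beta> *\<^sub>R l) + ((\<alpha> * t1) *\<^sub>R e1 + (\<beta> * t2) *\<^sub>R e2)"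
    using k l by (simp add: algebra_simps)
  show ?thesis
  proof (cases "T = 0")
    case True
    then have "t1 = 0" "t2 = 0" using k l by (auto simp: T_def max_def split: if_splits)
    then show ?thesis using eq M[OF k(1) l(1)] assms(2) unfolding gauge_radii_def T_def
      by (auto intro!: exI[of _ "\<alpha> *\<^sub>R k + \<beta> *\<^sub>R l"] exI[of _ 0])
  next
    case False
    then have T: "T > 0" using k l by (auto simp: T_def)
    have "\<alpha> * t1 + \<beta> * t2 \<le> (\<alpha> + \<beta>) * T"
      using assms by (auto simp: T_def distrib_right intro!: add_mono mult_left_mono)
    also have "\<dots> \<le> T" using assms T by (simp add: mult_left_le_one_le)
    finally have "((\<alpha> * t1)/T) *\<^sub>R e1 + ((\<beta> * t2)/T) *\<^sub>R e2 \<in> E"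
      using assms k l T by (intro convex_scaled_add_mem) (auto simp: add_divide_distrib[symmetric])
    moreover have "(\<alpha> * t1) *\<^sub>R e1 + (\<beta> * t2) *\<^sub>R e2
        = T *\<^sub>R (((\<alpha> * t1)/T) *\<^sub>R e1 + ((\<beta> * t2)/T) *\<^sub>R e2)"
      using T by (simp add: scaleR_add_right)
    ultimately show ?thesis using eq M[OF k(1) l(1)] T unfolding gauge_radii_def T_def[symmetric]
      by force
  qed
qed

lemma gdist_scaled_add_le:
  assumes "convex E" "0 \<in> interior E" "\<alpha> \<ge> 0" "\<beta> \<ge> 0" "\<alpha> + \<beta> \<le> 1" "K \<noteq> {}" "L \<noteq> {}"
    and M: "\<And>k l. k \<in> K \<Longrightarrow> l \<in> L \<Longrightarrow> \<alpha> *\<^sub>R k + \<beta> *\<^sub>R l \<in> M"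
  shows "gdist E (\<alpha> *\<^sub>R x + \<beta> *\<^sub>R y) M \<le> max (gdist E x K) (gdist E y L)"
proof (rule field_le_epsilon)
  fix \<epsilon> :: real assume e: "\<epsilon> > 0"
  obtain t1 where t1: "t1 \<in> gauge_radii E x K" "t1 < gdist E x K + \<epsilon>"
    using gauge_radii_approx[OF assms(6,2), where x=x and T="gdist E x K + \<epsilon>"] e by auto
  obtain t2 where t2: "t2 \<in> gauge_radii E y L" "t2 < gdist E y L + \<epsilon>"
    using gauge_radii_approx[OF assms(7,2), where x=y and T="gdist E y L + \<epsilon>"] e by auto
  have "gdist E (\<alpha> *\<^sub>R x + \<beta> *\<^sub>R y) M \<le> max t1 t2"
    using assms(2) interior_subset
    by (intro gdist_le gauge_radii_scaled_add[OF assms(1) _ assms(3-5) M t1(1) t2(1)]) auto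
  then show "gdist E (\<alpha> *\<^sub>R x + \<beta> *\<^sub>R y) M \<le> max (gdist E x K) (gdist E y L) + \<epsilon>"
    using t1 t2 by linarith
qed

lemma gdist_add_le:
  assumes "K \<noteq> {}" "convex E" "r > 0" "cball 0 r \<subseteq> E"
  shows "gdist E (x + z) K \<le> gdist E x K + norm z / r"
proof (rule field_le_epsilon)
  fix \<epsilon> :: real assume e: "\<epsilon> > 0"
  have "ball 0 r \<subseteq> E" using assms(4) ball_subset_cball by blast
  then have "ball 0 r \<subseteq> interior E" by (simp add: interior_maximal)
  then have int: "0 \<in> interior E" using assms(3) by auto
  obtain t where t: "t \<in> gauge_radii E x K" "t < gdist E x K + \<epsilon>"
    using gauge_radii_approx[OF assms(1) int, where x=x and T="gdist E x K + \<epsilon>"] e by auto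
  obtain k e1 where k: "k \<in> K" "e1 \<in> E" "x = k + t *\<^sub>R e1" "t \<ge> 0"
    using t by (auto simp: gauge_radii_def)
  have "t + norm z / r \<in> gauge_radii E (x + z) K"
  proof (cases "z = 0")
    case True then show ?thesis using t by simp
  next
    case False
    define e' where "e' = (r / norm z) *\<^sub>R z"
    have "e' \<in> cball 0 r" using False assms(3) by (simp add: e'_def)
    then have e': "e' \<in> E" using assms(4) by auto
    define T where "T = t + norm z / r"
    have T: "T > 0" using False assms(3) k(4) by (simp add: T_def add_nonneg_pos)
    have "t / T + (norm z / r) / T = 1"
      using T unfolding add_divide_distrib[symmetric] by (simp add: T_def)
    then have "(t / T) *\<^sub>R e1 + ((norm z / r) / T) *\<^sub>R e' \<in> E"
      using T k(4) assms(3) int interior_subset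
      by (intro convex_scaled_add_mem[OF assms(2) _ _ _ _ k(2) e']) auto
    moreover have "x + z = k + T *\<^sub>R ((t / T) *\<^sub>R e1 + ((norm z / r) / T) *\<^sub>R e')"
      using T False assms(3) k(3) by (simp add: scaleR_add_right e'_def)
    ultimately show ?thesis using k(1) T unfolding gauge_radii_def T_def by force
  qed
  then have "gdist E (x + z) K \<le> t + norm z / r" by (rule gdist_le)
  then show "gdist E (x + z) K \<le> gdist E x K + norm z / r + \<epsilon>" using t by linarith
qed

lemma continuous_on_gdist:
  assumes "K \<noteq> {}" "convex E" "0 \<in> interior E"
  shows "continuous_on UNIV (\<lambda>x. gdist E x K)"
proof -
  obtain r where r: "r > 0" "cball 0 r \<subseteq> E" using assms(3) mem_interior_cball by blast
  have "(1/r)-lipschitz_on UNIV (\<lambda>x. gdist E x K)"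
  proof (rule lipschitz_onI)
    fix x y :: 'a
    show "dist (gdist E x K) (gdist E y K) \<le> 1 / r * dist x y"
      using gdist_add_le[OF assms(1,2) r, of x "y - x"] gdist_add_le[OF assms(1,2) r, of y "x - y"]
      by (simp add: dist_real_def dist_norm norm_minus_commute abs_le_iff)
  qed (use r in auto)
  then show ?thesis by (rule lipschitz_on_continuous_on)
qed

subsection \<open>Superlevel sets of the Wills density\<close>

definition wills_density :: "(real \<Rightarrow> real) \<Rightarrow> 'a::euclidean_space set \<Rightarrow> 'a set \<Rightarrow> 'a \<Rightarrow> real" where
  "wills_density u K E x = exp (- u (gdist E x K))"

definition wills_superlevel :: "(real \<Rightarrow> real) \<Rightarrow> 'a::euclidean_space set \<Rightarrow> 'a set \<Rightarrow> real \<Rightarrow> 'a set" where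
  "wills_superlevel u K E s = {x. s < wills_density u K E x}"

lemma wills_eq_nn_integral_density: "wills u K E = (\<integral>\<^sup>+ x. ennreal (wills_density u K E x) \<partial>lborel)"
  by (simp add: wills_def wills_density_def)

lemma exp_uminus_antimono:
  fixes u :: "real \<Rightarrow> real"
  assumes "strict_mono_on {0..} u" "0 \<le> a" "a \<le> b"
  shows "exp (- u b) \<le> exp (- u a)"
  using strict_mono_on_leD[OF assms(1), of a b] assms by simp

lemma wills_density_le_at_0:
  assumes "strict_mono_on {0..} u" "K \<noteq> {}" "0 \<in> interior E"
  shows "wills_density u K E x \<le> exp (- u 0)"
  unfolding wills_density_def
  by (rule exp_uminus_antimono[OF assms(1) order.refl gdist_nonneg[OF assms(2,3)]])

lemma wills_density_scaled_add:
  assumes u: "strict_mono_on {0..} u" and E: "convex E" "0 \<in> interior E"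
    and "\<alpha> \<ge> 0" "\<beta> \<ge> 0" "\<alpha> + \<beta> \<le> 1" "K \<noteq> {}" "L \<noteq> {}"
    and M: "\<And>k l. k \<in> K \<Longrightarrow> l \<in> L \<Longrightarrow> \<alpha> *\<^sub>R k + \<beta> *\<^sub>R l \<in> M"
  shows "min (wills_density u K E x) (wills_density u L E y) \<le> wills_density u M E (\<alpha> *\<^sub>R x + \<beta> *\<^sub>R y)"
proof -
  have "gdist E (\<alpha> *\<^sub>R x + \<beta> *\<^sub>R y) M \<le> max (gdist E x K) (gdist E y L)"
    using assms by (intro gdist_scaled_add_le) auto
  moreover have "M \<noteq> {}" using assms by blast
  then have "0 \<le> gdist E (\<alpha> *\<^sub>R x + \<beta> *\<^sub>R y) M"
    using E by (intro gdist_nonneg)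
  ultimately show ?thesis unfolding wills_density_def
    by (auto simp: max_def min_def split: if_splits dest!: exp_uminus_antimono[OF u])
qed

lemma borel_measurable_wills_density:
  assumes "strict_mono_on {0..} u" "K \<noteq> {}" "convex E" "0 \<in> interior E"
  shows "wills_density u K E \<in> borel_measurable borel"
proof -
  \<comment> \<open>\<open>u\<close> is only monotone on \<open>[0, \<infinity>)\<close>, so measurability goes through \<open>u \<circ> max 0\<close>.\<close>
  have "mono (\<lambda>t. u (max 0 t))"
    by (rule monoI) (auto intro!: strict_mono_on_leD[OF assms(1)])
  then have [measurable]: "(\<lambda>t. u (max 0 t)) \<in> borel_measurable borel"
    by (rule borel_measurable_mono)
  have [measurable]: "(\<lambda>x. gdist E x K) \<in> borel_measurable borel"
    by (rule borel_measurable_continuous_onI[OF continuous_on_gdist[OF assms(2-4)]])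
  have "(\<lambda>x. exp (- u (max 0 (gdist E x K)))) \<in> borel_measurable borel"
    by measurable
  moreover have "(\<lambda>x. exp (- u (max 0 (gdist E x K)))) = wills_density u K E"
    using gdist_nonneg[OF assms(2,4)] by (auto simp: wills_density_def max_def)
  ultimately show ?thesis by simp
qed

lemma sets_wills_superlevel:
  assumes "strict_mono_on {0..} u" "K \<noteq> {}" "convex E" "0 \<in> interior E"
  shows "wills_superlevel u K E s \<in> sets lborel"
proof -
  have [measurable]: "wills_density u K E \<in> borel_measurable borel"
    by (rule borel_measurable_wills_density[OF assms])
  show ?thesis unfolding wills_superlevel_def by measurable
qed

lemma wills_superlevel_scaled_add:
  assumes "strict_mono_on {0..} u" "convex E" "0 \<in> interior E"
    and "\<alpha> \<ge> 0" "\<beta> \<ge> 0" "\<alpha> + \<beta> \<le> 1" "K \<noteq> {}" "L \<noteq> {}"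
    and "\<And>k l. k \<in> K \<Longrightarrow> l \<in> L \<Longrightarrow> \<alpha> *\<^sub>R k + \<beta> *\<^sub>R l \<in> M"
    and "x \<in> wills_superlevel u K E s" "y \<in> wills_superlevel u L E s"
  shows "\<alpha> *\<^sub>R x + \<beta> *\<^sub>R y \<in> wills_superlevel u M E s"
  using wills_density_scaled_add[OF assms(1-9), of x y] assms(10,11)
  by (auto simp: wills_superlevel_def)

lemma convex_wills_superlevel:
  assumes "strict_mono_on {0..} u" "convex E" "0 \<in> interior E" "convex K" "K \<noteq> {}"
  shows "convex (wills_superlevel u K E s)"
proof (rule convexI)
  fix x y and a b :: real
  assume "x \<in> wills_superlevel u K E s" "y \<in> wills_superlevel u K E s" "0 \<le> a" "0 \<le> b" "a + b = 1"
  then show "a *\<^sub>R x + b *\<^sub>R y \<in> wills_superlevel u K E s"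
    using assms by (intro wills_superlevel_scaled_add[where K=K and L=K]) (auto intro: convexD)
qed

lemma wills_superlevel_nonempty:
  assumes "0 \<in> interior E" "K \<noteq> {}" "s < exp (- u 0)"
  shows "wills_superlevel u K E s \<noteq> {}"
proof -
  obtain k where "k \<in> K" using assms by auto
  then have "k \<in> wills_superlevel u K E s"
    using assms gdist_self[OF _ assms(1)] by (auto simp: wills_superlevel_def wills_density_def)
  then show ?thesis by auto
qed

lemma bounded_wills_superlevel:
  assumes "strict_mono_on {0..} u" "0 \<in> interior E" "K \<noteq> {}" "bounded K" "bounded E"
    and T: "T \<ge> 0" "exp (- u T) \<le> s"
  shows "bounded (wills_superlevel u K E s)"
proof -
  obtain BK where BK: "\<And>k. k \<in> K \<Longrightarrow> norm k \<le> BK" using assms(4) bounded_iff by blast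
  obtain BE where BE: "\<And>e. e \<in> E \<Longrightarrow> norm e \<le> BE" using assms(5) bounded_iff by blast
  have BE0: "BE \<ge> 0" using BE[of 0] assms(2) interior_subset by force
  show ?thesis unfolding bounded_iff
  proof (intro exI ballI)
    fix x assume x: "x \<in> wills_superlevel u K E s"
    have "gdist E x K < T"
    proof (rule ccontr)
      assume "\<not> gdist E x K < T"
      then have "wills_density u K E x \<le> exp (- u T)"
        unfolding wills_density_def using exp_uminus_antimono[OF assms(1) T(1)] by simp
      then show False using x T by (auto simp: wills_superlevel_def)
    qed
    then obtain t where t: "t \<in> gauge_radii E x K" "t < T"
      using gauge_radii_approx[OF assms(3,2)] by blast
    obtain k e where ke: "k \<in> K" "e \<in> E" "x = k + t *\<^sub>R e" "t \<ge> 0"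
      using t by (auto simp: gauge_radii_def)
    have "norm x \<le> norm k + t * norm e" using ke by (simp add: norm_triangle_le)
    also have "\<dots> \<le> BK + T * BE"
      using BK[OF ke(1)] BE[OF ke(2)] t(2) ke(4) BE0 by (intro add_mono mult_mono) auto
    finally show "norm x \<le> BK + T * BE" .
  qed
qed

lemma wills_superlevel_eq_empty:
  assumes "strict_mono_on {0..} u" "K \<noteq> {}" "0 \<in> interior E" "exp (- u 0) \<le> s"
  shows "wills_superlevel u K E s = {}"
proof -
  have "\<not> s < wills_density u K E x" for x
    using wills_density_le_at_0[OF assms(1-3), of x] assms(4) by linarith
  then show ?thesis by (simp add: wills_superlevel_def)
qed

lemma wills_superlevel_eq_UNIV:
  assumes "K \<noteq> {}" "0 \<in> interior E" "\<forall>T\<ge>0. s < exp (- u T)"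
  shows "wills_superlevel u K E s = UNIV"
  using assms gdist_nonneg[OF assms(1,2)] by (auto simp: wills_superlevel_def wills_density_def)

subsection \<open>A weak Brunn--Minkowski inequality\<close>

lemma emeasure_interior_convex:
  fixes A :: "'a::euclidean_space set"
  assumes "convex A" "A \<in> sets lborel"
  shows "emeasure lborel (interior A) = emeasure lborel A"
proof (rule antisym)
  show "emeasure lborel (interior A) \<le> emeasure lborel A"
    by (rule emeasure_mono[OF interior_subset assms(2)])
  have fr: "frontier A \<in> sets lborel" by (simp add: borel_closed)
  have "frontier A \<in> null_sets lebesgue"
    using negligible_convex_frontier[OF assms(1)] by (simp add: negligible_iff_null_sets)
  then have nf: "frontier A \<in> null_sets lborel" using fr null_sets_completion_iff by blast
  have ib: "interior A \<in> sets lborel" by (simp add: borel_open)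
  have "A \<subseteq> interior A \<union> frontier A" using closure_subset by (auto simp: frontier_def)
  then have "emeasure lborel A \<le> emeasure lborel (interior A \<union> frontier A)"
    by (intro emeasure_mono) (use fr ib in auto)
  also have "\<dots> \<le> emeasure lborel (interior A) + emeasure lborel (frontier A)"
    by (rule emeasure_subadditive[OF ib fr])
  also have "\<dots> = emeasure lborel (interior A)" using null_setsD1[OF nf] by simp
  finally show "emeasure lborel A \<le> emeasure lborel (interior A)" .
qed

lemma open_affine_image_interior:
  fixes A :: "'a::real_normed_vector set"
  assumes "m \<noteq> 0"
  shows "open ((\<lambda>x. m *\<^sub>R x + d) ` interior A)"
  using open_affinity[OF open_interior[of A] assms, of d] by (simp add: add.commute)

lemma emeasure_affine_image_interior_convex:
  fixes A :: "'a::euclidean_space set"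
  assumes "convex A" "A \<in> sets lborel" "m > 0"
  shows "emeasure lborel ((\<lambda>x. m *\<^sub>R x + d) ` interior A) = ennreal (m ^ DIM('a)) * emeasure lborel A"
proof -
  have "open ((\<lambda>x. m *\<^sub>R x + d) ` interior A)"
    using assms(3) by (intro open_affine_image_interior) simp
  then have "emeasure lborel ((\<lambda>x. m *\<^sub>R x + d) ` interior A)
      = emeasure lebesgue ((\<lambda>x. m *\<^sub>R x + d) ` interior A)"
    by (simp add: borel_open)
  also have "\<dots> = ennreal (m ^ DIM('a)) * emeasure lebesgue (interior A)"
    using assms(3) by (simp add: emeasure_lebesgue_affine)
  also have "\<dots> = ennreal (m ^ DIM('a)) * emeasure lborel A"
    using emeasure_interior_convex[OF assms(1,2)] by (simp add: borel_open)
  finally show ?thesis .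
qed

lemma inner_less_of_mem_interior:
  fixes A :: "'a::euclidean_space set"
  assumes "x \<in> interior A" "v \<noteq> 0" "\<forall>y\<in>A. y \<bullet> v \<le> c"
  shows "x \<bullet> v < c"
proof -
  obtain e where e: "e > 0" "ball x e \<subseteq> A" using assms(1) mem_interior by blast
  define d where "d = e / (2 * norm v)"
  have d: "d > 0" "norm (d *\<^sub>R v) < e" using e assms(2) by (auto simp: d_def)
  then have "x + d *\<^sub>R v \<in> A" using e by (auto simp: dist_norm)
  then have "x \<bullet> v + d * (v \<bullet> v) \<le> c" using assms(3) by (auto simp: inner_add_left)
  moreover have "v \<bullet> v > 0" using assms(2) by simp
  ultimately show ?thesis using d(1) by (smt (verit) mult_pos_pos)
qed

lemma scaled_add_interior_closure_mem:
  fixes A B :: "'a::euclidean_space set"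
  assumes "x \<in> interior A" "b \<in> closure B" "\<alpha> > 0" "\<beta> > 0"
    and sub: "\<And>x y. x \<in> A \<Longrightarrow> y \<in> B \<Longrightarrow> \<alpha> *\<^sub>R x + \<beta> *\<^sub>R y \<in> C"
  shows "\<alpha> *\<^sub>R x + \<beta> *\<^sub>R b \<in> C"
proof -
  obtain e where e: "e > 0" "ball x e \<subseteq> A" using assms(1) mem_interior by blast
  obtain b' where b': "b' \<in> B" "dist b' b < \<alpha> * e / \<beta>"
    using assms(2,3,4) e(1) unfolding closure_approachable by (meson divide_pos_pos mult_pos_pos)
  define x' where "x' = x + (\<beta> / \<alpha>) *\<^sub>R (b - b')"
  have "dist x x' = (\<beta> / \<alpha>) * norm (b - b')"
    using assms by (simp add: x'_def dist_norm)
  also have "\<dots> < (\<beta> / \<alpha>) * (\<alpha> * e / \<beta>)"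
    using b' assms by (intro mult_strict_left_mono) (auto simp: dist_norm norm_minus_commute)
  also have "\<dots> = e" using assms by simp
  finally have "x' \<in> A" using e by auto
  moreover have "\<alpha> *\<^sub>R x + \<beta> *\<^sub>R b = \<alpha> *\<^sub>R x' + \<beta> *\<^sub>R b'"
    using assms by (simp add: x'_def algebra_simps)
  ultimately show ?thesis using sub b' by simp
qed

lemma scaled_translates_interior_disjoint:
  fixes A B :: "'a::euclidean_space set"
  assumes "v \<noteq> 0" "\<alpha> > 0" "\<beta> > 0"
    and a: "\<forall>y\<in>A. y \<bullet> v \<le> a \<bullet> v" and b: "\<forall>y\<in>B. b \<bullet> v \<le> y \<bullet> v"
  shows "(\<lambda>x. \<alpha> *\<^sub>R x + \<beta> *\<^sub>R b) ` interior A \<inter> (\<lambda>y. \<beta> *\<^sub>R y + \<alpha> *\<^sub>R a) ` interior B = {}"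
proof (rule ccontr)
  assume "\<not> ?thesis"
  then obtain x y where x: "x \<in> interior A" and y: "y \<in> interior B"
    and eq: "\<alpha> *\<^sub>R x + \<beta> *\<^sub>R b = \<beta> *\<^sub>R y + \<alpha> *\<^sub>R a" by auto
  have "x \<bullet> v < a \<bullet> v" using inner_less_of_mem_interior[OF x assms(1)] a by blast
  moreover have "y \<bullet> (- v) < b \<bullet> (- v)"
    using inner_less_of_mem_interior[OF y, of "- v" "b \<bullet> (- v)"] assms(1) b by simp
  moreover have "\<alpha> * (x \<bullet> v) + \<beta> * (b \<bullet> v) = \<beta> * (y \<bullet> v) + \<alpha> * (a \<bullet> v)"
    using arg_cong[OF eq, of "\<lambda>z. z \<bullet> v"] by (simp add: inner_add_left)
  ultimately show False using assms(2,3)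
    by (smt (verit, best) inner_minus_right mult_strict_left_mono)
qed

lemma emeasure_scaled_add_ge:
  fixes A B C :: "'a::euclidean_space set"
  assumes "convex A" "convex B" "bounded A" "bounded B" "A \<noteq> {}" "B \<noteq> {}"
    and "A \<in> sets lborel" "B \<in> sets lborel" "C \<in> sets lborel" "\<alpha> > 0" "\<beta> > 0"
    and sub: "\<And>x y. x \<in> A \<Longrightarrow> y \<in> B \<Longrightarrow> \<alpha> *\<^sub>R x + \<beta> *\<^sub>R y \<in> C"
  shows "ennreal (\<alpha> ^ DIM('a)) * emeasure lborel A + ennreal (\<beta> ^ DIM('a)) * emeasure lborel B
         \<le> emeasure lborel C"
proof -
  obtain v :: 'a where v: "v \<in> Basis" using nonempty_Basis by blast
  have ct: "continuous_on S (\<lambda>x. x \<bullet> v)" for S :: "'a set" by (intro continuous_intros)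
  obtain a where a: "a \<in> closure A" "\<forall>y\<in>closure A. y \<bullet> v \<le> a \<bullet> v"
    using continuous_attains_sup[OF _ _ ct, of "closure A"] assms(3,5) by auto
  obtain b where b: "b \<in> closure B" "\<forall>y\<in>closure B. b \<bullet> v \<le> y \<bullet> v"
    using continuous_attains_inf[OF _ _ ct, of "closure B"] assms(4,6) by auto
  define P where "P = (\<lambda>x. \<alpha> *\<^sub>R x + \<beta> *\<^sub>R b) ` interior A"
  define Q where "Q = (\<lambda>y. \<beta> *\<^sub>R y + \<alpha> *\<^sub>R a) ` interior B"
  have "P \<subseteq> C"
    unfolding P_def using scaled_add_interior_closure_mem[OF _ b(1) assms(10,11) sub] by blast
  moreover have "Q \<subseteq> C"
    unfolding Q_def using scaled_add_interior_closure_mem[OF _ a(1) assms(11,10), of _ B C] sub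
    by (auto simp: add.commute)
  moreover have "P \<inter> Q = {}" unfolding P_def Q_def
    using v a(2) b(2) closure_subset assms(10,11)
    by (intro scaled_translates_interior_disjoint[where v=v]) (auto simp: nonzero_Basis)
  moreover have "P \<in> sets lborel" "Q \<in> sets lborel"
    unfolding P_def Q_def using assms(10,11)
    by (auto intro!: borel_open open_affine_image_interior)
  ultimately have "emeasure lborel P + emeasure lborel Q \<le> emeasure lborel C"
    using assms(9) by (metis Un_least emeasure_mono plus_emeasure)
  then show ?thesis
    unfolding P_def Q_def using assms
    by (simp add: emeasure_affine_image_interior_convex)
qed

subsection \<open>The Wills functional as a layer integral\<close>

lemma nn_integral_layer_cake:
  fixes f :: "'a::euclidean_space \<Rightarrow> real"
  assumes [measurable]: "f \<in> borel_measurable borel" and f0: "\<And>x. f x \<ge> 0"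
  shows "(\<integral>\<^sup>+x. ennreal (f x) \<partial>lborel) =
         (\<integral>\<^sup>+s. indicator {0<..} s * emeasure lborel {x. s < f x} \<partial>lborel)"
proof -
  define g where "g x s = (indicator {p. 0 < snd p \<and> snd p < f (fst p)} (x, s) :: ennreal)" for x s
  have gm: "case_prod g \<in> borel_measurable (lborel \<Otimes>\<^sub>M lborel)"
    unfolding g_def by measurable
  have "ennreal (f x) = (\<integral>\<^sup>+s. g x s \<partial>lborel)" for x
  proof -
    have "(\<lambda>s. g x s) = indicator {0<..<f x}" by (auto simp: g_def indicator_def fun_eq_iff)
    then show ?thesis using f0[of x] by simp
  qed
  then have "(\<integral>\<^sup>+x. ennreal (f x) \<partial>lborel) = (\<integral>\<^sup>+x. (\<integral>\<^sup>+s. g x s \<partial>lborel) \<partial>lborel)"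
    by simp
  also have "\<dots> = (\<integral>\<^sup>+s. (\<integral>\<^sup>+x. g x s \<partial>lborel) \<partial>lborel)"
    by (rule pair_sigma_finite.Fubini'[symmetric, OF _ gm])
       (simp add: pair_sigma_finite.intro lborel.sigma_finite_measure_axioms)
  also have "\<dots> = (\<integral>\<^sup>+s. indicator {0<..} s * emeasure lborel {x. s < f x} \<partial>lborel)"
  proof (intro nn_integral_cong)
    fix s :: real
    have "(\<lambda>x. g x s) = (if 0 < s then indicator {x. s < f x} else (\<lambda>x. 0))"
      by (auto simp: g_def indicator_def fun_eq_iff)
    moreover have "{x. s < f x} \<in> sets lborel" by measurable
    ultimately show "(\<integral>\<^sup>+x. g x s \<partial>lborel) = indicator {0<..} s * emeasure lborel {x. s < f x}"
      by simp
  qed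
  finally show ?thesis .
qed

lemma borel_measurable_layer_emeasure:
  fixes f :: "'a::euclidean_space \<Rightarrow> real"
  assumes [measurable]: "f \<in> borel_measurable borel"
  shows "(\<lambda>s. indicator {0<..} s * emeasure lborel {x. s < f x}) \<in> borel_measurable lborel"
proof -
  define h where "h p = (indicator {p. 0 < fst p \<and> fst p < f (snd p)} p :: ennreal)" for p :: "real \<times> 'a"
  have "h \<in> borel_measurable (lborel \<Otimes>\<^sub>M lborel)" unfolding h_def by measurable
  then have "(\<lambda>s. \<integral>\<^sup>+ x. h (s, x) \<partial>(lborel::'a measure)) \<in> borel_measurable lborel"
    by (rule lborel.borel_measurable_nn_integral_fst)
  moreover have "(\<integral>\<^sup>+ x. h (s, x) \<partial>(lborel::'a measure)) = indicator {0<..} s * emeasure lborel {x. s < f x}"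
    for s
  proof -
    have "(\<lambda>x. h (s, x)) = (if 0 < s then indicator {x. s < f x} else (\<lambda>x. 0))"
      by (auto simp: h_def indicator_def fun_eq_iff)
    moreover have "{x. s < f x} \<in> sets lborel" by measurable
    ultimately show ?thesis by simp
  qed
  ultimately show ?thesis by simp
qed

lemma wills_eq_layer_integral:
  assumes "strict_mono_on {0..} u" "K \<noteq> {}" "convex E" "0 \<in> interior E"
  shows "wills u K E = (\<integral>\<^sup>+s. indicator {0<..} s * emeasure lborel (wills_superlevel u K E s) \<partial>lborel)"
    and "(\<lambda>s. indicator {0<..} s * emeasure lborel (wills_superlevel u K E s)) \<in> borel_measurable lborel"
  using nn_integral_layer_cake[OF borel_measurable_wills_density[OF assms]]
    borel_measurable_layer_emeasure[OF borel_measurable_wills_density[OF assms]]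
  by (simp_all add: wills_eq_nn_integral_density wills_superlevel_def wills_density_def)

lemma wills_neq_zero:
  assumes "strict_mono_on {0..} u" "K \<noteq> {}" "convex E" "0 \<in> interior E"
  shows "wills u K E \<noteq> 0"
proof
  assume "wills u K E = 0"
  moreover have "(\<lambda>x. ennreal (wills_density u K E x)) \<in> borel_measurable lborel"
    using borel_measurable_wills_density[OF assms] by simp
  ultimately have "AE x in lborel. ennreal (wills_density u K E x) = 0"
    by (simp add: wills_eq_nn_integral_density nn_integral_0_iff_AE)
  then have "AE x::'a in lborel. False"
    by (simp add: wills_density_def)
  then have "emeasure lborel (UNIV :: 'a set) = 0"
    using ae_filter_eq_bot_iff trivial_limit_def by (metis space_borel space_lborel)
  then show False by simp
qed

lemma emeasure_wills_superlevel_scaled_add_ge: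
  fixes K L M E :: "'a::euclidean_space set"
  assumes u: "strict_mono_on {0..} u" and K: "convex_body K" and L: "convex_body L"
    and E: "convex_body E" "0 \<in> interior E"
    and ab: "\<alpha> > 0" "\<beta> > 0" "\<alpha> + \<beta> \<le> 1"
    and M: "\<And>k l. k \<in> K \<Longrightarrow> l \<in> L \<Longrightarrow> \<alpha> *\<^sub>R k + \<beta> *\<^sub>R l \<in> M"
  shows "ennreal (\<alpha> ^ DIM('a)) * emeasure lborel (wills_superlevel u K E s)
       + ennreal (\<beta> ^ DIM('a)) * emeasure lborel (wills_superlevel u L E s)
       \<le> emeasure lborel (wills_superlevel u M E s)"
proof -
  have K': "K \<noteq> {}" "convex K" "bounded K" and L': "L \<noteq> {}" "convex L" "bounded L"
    and E': "convex E" "bounded E"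
    using K L E by (auto simp: convex_body_def compact_imp_bounded)
  have "M \<noteq> {}" using K' L' M by blast
  \<comment> \<open>Superlevel sets are empty above \<open>e\<^bsup>-u(0)\<^esup>\<close>, the whole space below all values of the
    density, and bounded in between.\<close>
  consider "exp (- u 0) \<le> s" | "\<forall>T\<ge>0. s < exp (- u T)"
    | T where "T \<ge> 0" "exp (- u T) \<le> s" "s < exp (- u 0)"
    by fastforce
  then show ?thesis
  proof cases
    case 1
    then have "wills_superlevel u K E s = {}" "wills_superlevel u L E s = {}"
      using wills_superlevel_eq_empty[OF u _ E(2)] K' L' by auto
    then show ?thesis by simp
  next
    case 2
    then show ?thesis using wills_superlevel_eq_UNIV[OF \<open>M \<noteq> {}\<close> E(2)] by simp
  next
    case 3
    show ?thesis
    proof (rule emeasure_scaled_add_ge)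
      show "convex (wills_superlevel u K E s)" "convex (wills_superlevel u L E s)"
        using K' L' E E' by (auto intro: convex_wills_superlevel[OF u])
      show "bounded (wills_superlevel u K E s)" "bounded (wills_superlevel u L E s)"
        using K' L' E E' 3 by (auto intro: bounded_wills_superlevel[OF u])
      show "wills_superlevel u K E s \<noteq> {}" "wills_superlevel u L E s \<noteq> {}"
        using wills_superlevel_nonempty[OF E(2)] K' L' 3 by auto
      show "wills_superlevel u K E s \<in> sets lborel" "wills_superlevel u L E s \<in> sets lborel"
        "wills_superlevel u M E s \<in> sets lborel"
        using sets_wills_superlevel[OF u _ E'(1) E(2)] K' L' \<open>M \<noteq> {}\<close> by auto
      show "\<alpha> *\<^sub>R x + \<beta> *\<^sub>R y \<in> wills_superlevel u M E s"
        if "x \<in> wills_superlevel u K E s" "y \<in> wills_superlevel u L E s" for x y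
        using that ab K' L' E E' \<open>M \<noteq> {}\<close> M by (intro wills_superlevel_scaled_add[OF u]) auto
    qed (use ab in auto)
  qed
qed

lemma wills_scaled_add_ge:
  fixes K L M E :: "'a::euclidean_space set"
  assumes u: "strict_mono_on {0..} u" and K: "convex_body K" and L: "convex_body L"
    and E: "convex_body E" "0 \<in> interior E"
    and ab: "\<alpha> > 0" "\<beta> > 0" "\<alpha> + \<beta> \<le> 1"
    and M: "\<And>k l. k \<in> K \<Longrightarrow> l \<in> L \<Longrightarrow> \<alpha> *\<^sub>R k + \<beta> *\<^sub>R l \<in> M"
  shows "ennreal (\<alpha> ^ DIM('a)) * wills u K E + ennreal (\<beta> ^ DIM('a)) * wills u L E \<le> wills u M E"
proof -
  have ne: "K \<noteq> {}" "L \<noteq> {}" and "convex E"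
    using K L E by (auto simp: convex_body_def)
  then have "M \<noteq> {}" using M by blast
  note layers = wills_eq_layer_integral[OF u _ \<open>convex E\<close> E(2)]
  have "ennreal (\<alpha> ^ DIM('a)) * wills u K E + ennreal (\<beta> ^ DIM('a)) * wills u L E
      = (\<integral>\<^sup>+s. ennreal (\<alpha> ^ DIM('a)) * (indicator {0<..} s * emeasure lborel (wills_superlevel u K E s))
           + ennreal (\<beta> ^ DIM('a)) * (indicator {0<..} s * emeasure lborel (wills_superlevel u L E s))
          \<partial>lborel)"
    using layers[OF ne(1)] layers[OF ne(2)] by (simp add: nn_integral_add nn_integral_cmult)
  also have "\<dots> \<le> wills u M E"
    unfolding layers(1)[OF \<open>M \<noteq> {}\<close>]
    by (intro nn_integral_mono)
       (simp add: indicator_def emeasure_wills_superlevel_scaled_add_ge[OF assms])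
  finally show ?thesis .
qed

definition lp_weight :: "real \<Rightarrow> real \<Rightarrow> real \<Rightarrow> real" where
  "lp_weight p lam mu = mu powr (1 / (p / (p - 1))) * lam powr (1 / p)"

lemma lp_weight_pos: "lam > 0 \<Longrightarrow> mu > 0 \<Longrightarrow> lp_weight p lam mu > 0"
  by (simp add: lp_weight_def)

lemma scaled_add_mem_lp_comb:
  assumes "0 \<le> mu" "mu \<le> 1" "k \<in> K" "l \<in> L"
  shows "lp_weight p (1 - lam) (1 - mu) *\<^sub>R k + lp_weight p lam mu *\<^sub>R l \<in> lp_comb p lam K L"
  using assms unfolding lp_comb_def lp_weight_def Let_def by force

lemma lp_weights_add_le_1:
  assumes "p > 1" "0 < lam" "lam < 1" "0 < mu" "mu < 1"
  shows "lp_weight p (1 - lam) (1 - mu) + lp_weight p lam mu \<le> 1"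
proof -
  define q where "q = p / (p - 1)"
  have conj: "1 / q + 1 / p = 1" "0 \<le> 1 / q" "0 \<le> 1 / p"
    using assms(1) by (auto simp: q_def field_simps)
  have "lp_weight p (1 - lam) (1 - mu) \<le> 1 / q * (1 - mu) + 1 / p * (1 - lam)"
    unfolding lp_weight_def q_def[symmetric]
    by (rule Youngs_inequality_0[OF conj(2,3,1)]) (use assms in auto)
  moreover have "lp_weight p lam mu \<le> 1 / q * mu + 1 / p * lam"
    unfolding lp_weight_def q_def[symmetric]
    by (rule Youngs_inequality_0[OF conj(2,3,1)]) (use assms in auto)
  moreover have "1 / q * (1 - mu) + 1 / p * (1 - lam) + (1 / q * mu + 1 / p * lam) = 1 / q + 1 / p"
    by (simp add: right_diff_distrib)
  ultimately show ?thesis using conj(1) by linarith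
qed

text \<open>
  For the optimal choice \<open>mu = c A\<^sup>p / S\<close> Young's inequality is an equality, which is the identity
  below.
\<close>

lemma lp_weight_mult_optimal:
  assumes "p > 1" "c > 0" "A > 0" "S > 0" "mu = c * A powr p / S"
  shows "lp_weight p c mu * A = mu * S powr (1 / p)"
proof -
  have "A = (mu * S / c) powr (1 / p)"
    using assms by (simp add: powr_powr)
  then have "lp_weight p c mu * A
      = mu powr (1 / (p / (p - 1))) * c powr (1 / p) * (mu powr (1 / p) * S powr (1 / p) / c powr (1 / p))"
    using assms by (simp add: lp_weight_def powr_divide powr_mult)
  also have "\<dots> = mu powr (1 / (p / (p - 1)) + 1 / p) * S powr (1 / p)"
    using assms by (simp add: powr_add)
  also have "1 / (p / (p - 1)) + 1 / p = 1"
    using assms(1) by (simp add: field_simps)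
  finally show ?thesis using assms by simp
qed

lemma power_add_le_two_power:
  fixes x y :: real
  assumes "0 \<le> x" "0 \<le> y"
  shows "(x + y) ^ Suc n \<le> 2 ^ n * (x ^ Suc n + y ^ Suc n)"
proof (induction n)
  case 0 then show ?case by simp
next
  case (Suc n)
  \<comment> \<open>Chebyshev's sum inequality for the similarly ordered pairs \<open>(x, y)\<close> and \<open>(x^{n+1}, y^{n+1})\<close>\<close>
  have "0 \<le> (x - y) * (x ^ Suc n - y ^ Suc n)"
    using assms power_mono[of x y "Suc n"] power_mono[of y x "Suc n"]
    by (cases "x \<le> y") (auto intro: mult_nonpos_nonpos)
  then have cheb: "(x + y) * (x ^ Suc n + y ^ Suc n) \<le> 2 * (x ^ Suc (Suc n) + y ^ Suc (Suc n))"
    by (simp add: algebra_simps)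
  have "(x + y) ^ Suc (Suc n) \<le> (x + y) * (2 ^ n * (x ^ Suc n + y ^ Suc n))"
    using Suc assms by (simp add: mult_left_mono)
  also have "\<dots> \<le> 2 ^ n * (2 * (x ^ Suc (Suc n) + y ^ Suc (Suc n)))"
    using cheb by (simp add: mult.left_commute)
  also have "\<dots> = 2 ^ Suc n * (x ^ Suc (Suc n) + y ^ Suc (Suc n))"
    by simp
  finally show ?case .
qed

lemma two_power_le_fact: "(2::real) ^ n \<le> fact (Suc n)"
proof (induction n)
  case 0 then show ?case by simp
next
  case (Suc n)
  have "(2::real) ^ Suc n \<le> real (Suc (Suc n)) * fact (Suc n)"
    using Suc by (simp add: mult_mono)
  then show ?case by simp
qed

text \<open>
  With \<open>A = a\<^bsup>1/n\<^esup>\<close>, \<open>B = b\<^bsup>1/n\<^esup>\<close>, \<open>S = (1 - lam) A\<^sup>p + lam B\<^sup>p\<close> and \<open>mu = lam B\<^sup>p / S\<close>, the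
  two terms on the right become \<open>S\<^bsup>n/p\<^esup> (1 - mu)\<^sup>n\<close> and \<open>S\<^bsup>n/p\<^esup> mu\<^sup>n\<close>.
\<close>

lemma lp_weight_choice:
  fixes a b lam p :: real and n :: nat
  assumes "a > 0" "b > 0" "0 < lam" "lam < 1" "p > 1" "n > 0"
  obtains mu where "0 < mu" "mu < 1"
    "((1 - lam) * a powr (p / n) + lam * b powr (p / n)) / fact n powr (p / n)
      \<le> (lp_weight p (1 - lam) (1 - mu) ^ n * a + lp_weight p lam mu ^ n * b) powr (p / n)"
proof -
  define A where "A = a powr (1 / n)"
  define B where "B = b powr (1 / n)"
  have AB: "A > 0" "B > 0" "A ^ n = a" "B ^ n = b"
    using assms by (auto simp: A_def B_def powr_powr simp flip: powr_realpow)
  define S where "S = (1 - lam) * A powr p + lam * B powr p"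
  have S: "S > 0" "S = (1 - lam) * a powr (p / n) + lam * b powr (p / n)"
    using assms AB by (auto simp: S_def A_def B_def powr_powr intro: add_pos_pos)
  define mu where "mu = lam * B powr p / S"
  have mu: "0 < mu" "mu < 1" "1 - mu = (1 - lam) * A powr p / S"
    using assms AB S by (auto simp: mu_def S_def field_simps)
  have "lp_weight p (1 - lam) (1 - mu) * A = (1 - mu) * S powr (1 / p)"
    using assms AB S mu by (intro lp_weight_mult_optimal) auto
  then have "lp_weight p (1 - lam) (1 - mu) ^ n * a = (1 - mu) ^ n * (S powr (1 / p)) ^ n"
    unfolding AB(3)[symmetric] power_mult_distrib[symmetric] by simp
  moreover have "lp_weight p lam mu * B = mu * S powr (1 / p)"
    using assms AB S by (intro lp_weight_mult_optimal) (auto simp: mu_def)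
  then have "lp_weight p lam mu ^ n * b = mu ^ n * (S powr (1 / p)) ^ n"
    unfolding AB(4)[symmetric] power_mult_distrib[symmetric] by simp
  moreover have "(S powr (1 / p)) ^ n = S powr (n / p)"
    using S by (simp add: powr_powr flip: powr_realpow)
  ultimately have sum: "lp_weight p (1 - lam) (1 - mu) ^ n * a + lp_weight p lam mu ^ n * b
      = S powr (n / p) * ((1 - mu) ^ n + mu ^ n)"
    by (simp add: algebra_simps)
  obtain m where m: "n = Suc m" using assms(6) gr0_implies_Suc by blast
  have "1 \<le> 2 ^ m * ((1 - mu) ^ n + mu ^ n)"
    using power_add_le_two_power[of "1 - mu" mu m] mu(1,2) m by simp
  also have "\<dots> \<le> fact n * ((1 - mu) ^ n + mu ^ n)"
    using two_power_le_fact[of m] m mu(1,2) by (intro mult_right_mono) auto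
  finally have "S powr (n / p) / fact n \<le> lp_weight p (1 - lam) (1 - mu) ^ n * a + lp_weight p lam mu ^ n * b"
    unfolding sum using S by (simp add: divide_le_eq mult.commute mult_le_cancel_left1)
  then have "(S powr (n / p) / fact n) powr (p / n)
      \<le> (lp_weight p (1 - lam) (1 - mu) ^ n * a + lp_weight p lam mu ^ n * b) powr (p / n)"
    using assms by (intro powr_mono2) auto
  moreover have "(S powr (n / p) / fact n) powr (p / n) = S / fact n powr (p / n)"
    using S assms by (simp add: powr_divide powr_powr)
  ultimately show ?thesis using that mu S(2) by simp
qed

lemma epowr_lp_mean_le:
  fixes WK WL WM :: ennreal and n :: nat
  assumes "p > 1" "0 < lam" "lam < 1" "n > 0" "WK \<noteq> 0" "WL \<noteq> 0"
    and comb: "\<And>mu. 0 < mu \<Longrightarrow> mu < 1 \<Longrightarrow>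
      ennreal (lp_weight p (1 - lam) (1 - mu) ^ n) * WK + ennreal (lp_weight p lam mu ^ n) * WL \<le> WM"
  shows "ennreal (1 / (fact n powr (p / n))) *
      (ennreal (1 - lam) * epowr WK (p / n) + ennreal lam * epowr WL (p / n)) \<le> epowr WM (p / n)"
proof (cases "WM = \<infinity>")
  case True
  then show ?thesis by (simp add: epowr_def)
next
  case False
  have "0 < lp_weight p (1 - lam) (1 / 2)" "0 < lp_weight p lam (1 / 2)"
    using assms(2,3) by (simp_all add: lp_weight_pos)
  then have "WK \<noteq> \<infinity> \<and> WL \<noteq> \<infinity>"
    using comb[of "1 / 2"] False by (auto simp: ennreal_mult_top top_unique)
  moreover define a b w where "a = enn2real WK" "b = enn2real WL" "w = enn2real WM"
  ultimately have fin: "WK = ennreal a" "WL = ennreal b" "WM = ennreal w"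
    using False by (simp_all add: ennreal_enn2real_if)
  have ab: "a > 0" "b > 0" "w \<ge> 0"
    using fin assms(5,6) by (auto simp: a_b_w_def less_le)
  define r where "r = p / n"
  have r: "r > 0" using assms(1,4) by (simp add: r_def)
  obtain mu where mu: "0 < mu" "mu < 1"
    "((1 - lam) * a powr r + lam * b powr r) / fact n powr r
      \<le> (lp_weight p (1 - lam) (1 - mu) ^ n * a + lp_weight p lam mu ^ n * b) powr r"
    using lp_weight_choice[OF ab(1,2) assms(2,3,1,4)] unfolding r_def by blast
  define \<alpha> \<beta> where "\<alpha> = lp_weight p (1 - lam) (1 - mu) ^ n" "\<beta> = lp_weight p lam mu ^ n"
  have \<alpha>\<beta>: "\<alpha> \<ge> 0" "\<beta> \<ge> 0" using assms(2,3) mu(1,2) by (simp_all add: \<alpha>_\<beta>_def lp_weight_pos less_imp_le)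
  have "ennreal (\<alpha> * a + \<beta> * b) = ennreal \<alpha> * WK + ennreal \<beta> * WL"
    using \<alpha>\<beta> ab fin by (simp add: ennreal_mult)
  also have "\<dots> \<le> ennreal w" using comb[OF mu(1,2)] fin by (simp add: \<alpha>_\<beta>_def)
  finally have "\<alpha> * a + \<beta> * b \<le> w" using ab(3) by simp
  then have le: "((1 - lam) * a powr r + lam * b powr r) / fact n powr r \<le> w powr r"
    using mu(3) \<alpha>\<beta> ab r unfolding \<alpha>_\<beta>_def[symmetric]
    by (meson order.trans powr_mono2 less_imp_le add_nonneg_nonneg mult_nonneg_nonneg)
  have "ennreal (1 / fact n powr r) * (ennreal (1 - lam) * ennreal (a powr r) + ennreal lam * ennreal (b powr r))
      = ennreal (1 / fact n powr r) * ennreal ((1 - lam) * a powr r + lam * b powr r)"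
    using assms(2,3) by (simp add: ennreal_mult)
  also have "\<dots> = ennreal (1 / fact n powr r * ((1 - lam) * a powr r + lam * b powr r))"
    by (rule ennreal_mult[symmetric]) (use assms(2,3) in auto)
  also have "\<dots> \<le> ennreal (w powr r)" using le by (intro ennreal_leI) simp
  finally show ?thesis using fin ab by (simp add: epowr_def r_def[symmetric])
qed

theorem mainTheorem13:
  fixes K L E :: "'a::euclidean_space set" and u :: "real \<Rightarrow> real" and p lam :: real
  assumes "convex_body K" and "convex_body L" and "convex_body E"
    and "0 \<in> interior E"
    and "strict_mono_on {0..} u"
    and "p > 1"
    and "0 < lam" and "lam < 1"
  shows "epowr (wills u (lp_comb p lam K L) E) (p / DIM('a)) \<ge>
    ennreal (1 / (fact DIM('a) powr (p / DIM('a)))) *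
      (ennreal (1 - lam) * epowr (wills u K E) (p / DIM('a))
       + ennreal lam * epowr (wills u L E) (p / DIM('a)))"
proof (rule epowr_lp_mean_le)
  have K: "K \<noteq> {}" and L: "L \<noteq> {}" and E: "convex E"
    using assms(1-3) by (auto simp: convex_body_def)
  show "wills u K E \<noteq> 0" "wills u L E \<noteq> 0"
    using wills_neq_zero[OF assms(5) _ E assms(4)] K L by auto
  show "ennreal (lp_weight p (1 - lam) (1 - mu) ^ DIM('a)) * wills u K E
      + ennreal (lp_weight p lam mu ^ DIM('a)) * wills u L E \<le> wills u (lp_comb p lam K L) E"
    if mu: "0 < mu" "mu < 1" for mu
  proof (rule wills_scaled_add_ge[OF assms(5,1,2,3,4)])
    show "0 < lp_weight p (1 - lam) (1 - mu)" "0 < lp_weight p lam mu"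
      using mu assms(7,8) by (simp_all add: lp_weight_pos)
    show "lp_weight p (1 - lam) (1 - mu) + lp_weight p lam mu \<le> 1"
      using lp_weights_add_le_1[OF assms(6-8) mu] .
    show "lp_weight p (1 - lam) (1 - mu) *\<^sub>R k + lp_weight p lam mu *\<^sub>R l \<in> lp_comb p lam K L"
      if "k \<in> K" "l \<in> L" for k l
      by (rule scaled_add_mem_lp_comb) (use mu that in auto)
  qed
qed (use assms in auto)

end
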